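(* Let $A_0:=(\mathrm{Id}-\tau\Delta_h)^{-1}$. The unique optimal pair $(X^*_{h\tau},U^*_{h\tau})\in\mathbb{X}_{h\tau}\times\mathbb{U}_{h\tau}$ of problem SLQ$_{h\tau}$ satisfies, for $n=0,1,\dots,N-1$, $$X^*_{h\tau}(t_{n+1})=A_0^{n+1}\prod_{j=1}^{n+1}(1+\Delta_jW)X^*_{h\tau}(0)+\tau\sum_{j=0}^nA_0^{n+1-j}\prod_{k=j+2}^{n+1}(1+\Delta_kW)U^*_{h\tau}(t_j)+\sum_{j=0}^nA_0^{n+1-j}\prod_{k=j+2}^{n+1}(1+\Delta_kW)\mathcal{R}_h\sigma(t_j)\Delta_{j+1}W,$$ $X^*_{h\tau}(0)=\mathcal{R}_hX_0$, and the discrete optimality condition $$U^*_{h\tau}(t_n)-(K_{h\tau}X^*_{h\tau})(t_n)=0,$$ where $$(K_{h\tau}X^*_{h\tau})(t_n):=-\tau\,\mathbb{E}\Big[\sum_{j=n+1}^NA_0^{j-n}\prod_{k=n+2}^j(1+\Delta_kW)X^*_{h\tau}(t_j)\,\Big|\,\mathcal{F}_{t_n}\Big]-\alpha\,\mathbb{E}\Big[A_0^{N-n}\prod_{k=n+2}^N(1+\Delta_kW)X^*_{h\tau}(T)\,\Big|\,\mathcal{F}_{t_n}\Big].$$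
   Context: $D\subset\mathbb{R}^d$ is a bounded domain with $C^2$ boundary, $T>0$, $\alpha\ge0$, $\mathbb{L}^2=L^2(D)$, $\mathbb{H}_0^1=H_0^1(D)$, $X_0\in\mathbb{H}_0^1\cap\mathbb{H}^3$ and $\sigma\in C^1([0,T];\mathbb{H}_0^1\cap\mathbb{H}^3)$ are deterministic. $(\Omega,\mathcal{F},\mathbb{F},\mathbb{P})$ is a complete filtered probability space with $\mathbb{F}=\{\mathcal{F}_t\}$ generated by a real standard Wiener process $W$ (augmented by null sets). $\mathbb{V}_h\subset\mathbb{H}_0^1$ is the space of continuous piecewise affine functions on a regular triangulation of $D$ of mesh size $h$; $\Delta_h:\mathbb{V}_h\to\mathbb{V}_h$ is the discrete Laplacian $(-\Delta_h\xi,\phi)_{\mathbb{L}^2}=(\nabla\xi,\nabla\phi)_{\mathbb{L}^2}$; $\mathcal{R}_h$ is the Ritz projection onto $\mathbb{V}_h$; $\mathrm{Id}$ is the identity on $\mathbb{V}_h$. Time mesh: $\tau=T/N\le1$, $t_n=n\tau$, $\Delta_nW=W(t_n)-W(t_{n-1})$; empty products equal $1$. $\mathbb{X}_{h\tau}$ and $\mathbb{U}_{h\tau}$ are the sets of $\mathbb{F}$-adapted square-integrable $\mathbb{V}_h$-valued processes that are constant on each $[t_n,t_{n+1})$ (elements of $\mathbb{X}_{h\tau}$ also carry a terminal value $X(T)=X(t_N)$), with norms $\|X\|_{\mathbb{X}_{h\tau}}^2=\tau\sum_{n=1}^N\mathbb{E}\|X(t_n)\|_{\mathbb{L}^2}^2$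 and $\|U\|_{\mathbb{U}_{h\tau}}^2=\tau\sum_{n=0}^{N-1}\mathbb{E}\|U(t_n)\|_{\mathbb{L}^2}^2$. Problem SLQ$_{h\tau}$: minimize $\mathcal{J}_\tau(X_{h\tau},U_{h\tau})=\frac12[\|X_{h\tau}\|^2_{\mathbb{X}_{h\tau}}+\|U_{h\tau}\|^2_{\mathbb{U}_{h\tau}}]+\frac\alpha2\mathbb{E}\|X_{h\tau}(T)\|_{\mathbb{L}^2}^2$ over $U_{h\tau}\in\mathbb{U}_{h\tau}$, subject to $X_{h\tau}(t_{n+1})-X_{h\tau}(t_n)=\tau[\Delta_hX_{h\tau}(t_{n+1})+U_{h\tau}(t_n)]+[X_{h\tau}(t_n)+\mathcal{R}_h\sigma(t_n)]\Delta_{n+1}W$ for $n=0,\dots,N-1$, $X_{h\tau}(0)=\mathcal{R}_hX_0$. *)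

theory Defs
  imports "HOL-Probability.Probability"
begin

text \<open>The FE space V_h is modelled by a finite-dimensional real inner product space 'v
  whose inner product is the L2 inner product.  The Dirichlet form (grad xi, grad phi)_L2
  restricted to V_h is a symmetric, positive definite bilinear form a on 'v.\<close>

definition grad_form :: "('v::euclidean_space \<Rightarrow> 'v \<Rightarrow> real) \<Rightarrow> bool" where
  "grad_form a \<longleftrightarrow> bilinear a \<and> (\<forall>x y. a x y = a y x) \<and> (\<forall>x. x \<noteq> 0 \<longrightarrow> a x x > 0)"

definition disc_lap :: "('v::euclidean_space \<Rightarrow> 'v \<Rightarrow> real) \<Rightarrow> 'v \<Rightarrow> 'v" where
  "disc_lap a xi = (THE y. \<forall>phi. - (y \<bullet> phi) = a xi phi)"

definition A0 :: "('v::euclidean_space \<Rightarrow> 'v \<Rightarrow> real) \<Rightarrow> real \<Rightarrow> 'v \<Rightarrow> 'v" where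
  "A0 a \<tau> = inv (\<lambda>x. x - \<tau> *\<^sub>R disc_lap a x)"

definition wiener_process :: "'w measure \<Rightarrow> real \<Rightarrow> (real \<Rightarrow> 'w \<Rightarrow> real) \<Rightarrow> bool" where
  "wiener_process M T W \<longleftrightarrow>
     (\<forall>t\<in>{0..T}. W t \<in> borel_measurable M) \<and>
     (AE \<omega> in M. W 0 \<omega> = 0) \<and>
     (AE \<omega> in M. continuous_on {0..T} (\<lambda>t. W t \<omega>)) \<and>
     (\<forall>s t. 0 \<le> s \<longrightarrow> s < t \<longrightarrow> t \<le> T \<longrightarrow>
        distributed M lborel (\<lambda>\<omega>. W t \<omega> - W s \<omega>)
          (\<lambda>x. ennreal (normal_density 0 (sqrt (t - s)) x))) \<and>
     (\<forall>(n::nat) (ts::nat \<Rightarrow> real). 0 \<le> ts 0 \<longrightarrow> ts n \<le> T \<longrightarrow> (\<forall>i<n. ts i < ts (Suc i)) \<longrightarrow>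
        prob_space.indep_vars M (\<lambda>_. borel) (\<lambda>i \<omega>. W (ts (Suc i)) \<omega> - W (ts i) \<omega>) {..<n})"

definition W_filtration :: "'w measure \<Rightarrow> (real \<Rightarrow> 'w \<Rightarrow> real) \<Rightarrow> real \<Rightarrow> 'w measure" where
  "W_filtration M W t = sigma (space M)
     ({W s -` B \<inter> space M | s B. s \<in> {0..t} \<and> B \<in> sets borel} \<union> null_sets M)"

definition tgrid :: "real \<Rightarrow> nat \<Rightarrow> nat \<Rightarrow> real" where
  "tgrid T N n = real n * (T / real N)"

text \<open>Delta_j W = W(t_j) - W(t_{j-1}) (used for j >= 1).\<close>
definition dW :: "(real \<Rightarrow> 'w \<Rightarrow> real) \<Rightarrow> real \<Rightarrow> nat \<Rightarrow> nat \<Rightarrow> 'w \<Rightarrow> real" where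
  "dW W T N j \<omega> = W (tgrid T N j) \<omega> - W (tgrid T N (j - 1)) \<omega>"

definition vec_cond_exp :: "'w measure \<Rightarrow> 'w measure \<Rightarrow> ('w \<Rightarrow> 'v::euclidean_space) \<Rightarrow> 'w \<Rightarrow> 'v" where
  "vec_cond_exp M F Y = (\<lambda>\<omega>. \<Sum>b\<in>Basis. real_cond_exp M F (\<lambda>\<omega>'. Y \<omega>' \<bullet> b) \<omega> *\<^sub>R b)"

text \<open>x0 = R_h X_0, r n = R_h sigma(t_n).  X n = X(t_n) (n = 0..N), U n = U(t_n) (n = 0..N-1).\<close>
definition slq_admissible ::
  "'w measure \<Rightarrow> (real \<Rightarrow> 'w \<Rightarrow> real) \<Rightarrow> real \<Rightarrow> nat \<Rightarrow> ('v::euclidean_space \<Rightarrow> 'v \<Rightarrow> real)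
   \<Rightarrow> 'v \<Rightarrow> (nat \<Rightarrow> 'v) \<Rightarrow> (nat \<Rightarrow> 'w \<Rightarrow> 'v) \<Rightarrow> (nat \<Rightarrow> 'w \<Rightarrow> 'v) \<Rightarrow> bool" where
  "slq_admissible M W T N a x0 r X U \<longleftrightarrow>
     (\<forall>n<N. U n \<in> borel_measurable (W_filtration M W (tgrid T N n)) \<and>
            integrable M (\<lambda>\<omega>. (norm (U n \<omega>))\<^sup>2)) \<and>
     (\<forall>n\<le>N. X n \<in> borel_measurable (W_filtration M W (tgrid T N n)) \<and>
            integrable M (\<lambda>\<omega>. (norm (X n \<omega>))\<^sup>2)) \<and>
     (\<forall>\<omega>\<in>space M. X 0 \<omega> = x0) \<and>
     (\<forall>n<N. \<forall>\<omega>\<in>space M.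
        X (Suc n) \<omega> - X n \<omega> =
          (T / real N) *\<^sub>R (disc_lap a (X (Suc n) \<omega>) + U n \<omega>)
          + dW W T N (Suc n) \<omega> *\<^sub>R (X n \<omega> + r n))"

definition slq_cost ::
  "'w measure \<Rightarrow> real \<Rightarrow> nat \<Rightarrow> real \<Rightarrow> (nat \<Rightarrow> 'w \<Rightarrow> 'v::euclidean_space) \<Rightarrow> (nat \<Rightarrow> 'w \<Rightarrow> 'v) \<Rightarrow> real" where
  "slq_cost M T N \<alpha> X U =
     1/2 * ((T / real N) * (\<Sum>n\<in>{1..N}. integral\<^sup>L M (\<lambda>\<omega>. (norm (X n \<omega>))\<^sup>2))
          + (T / real N) * (\<Sum>n<N. integral\<^sup>L M (\<lambda>\<omega>. (norm (U n \<omega>))\<^sup>2)))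
     + \<alpha> / 2 * integral\<^sup>L M (\<lambda>\<omega>. (norm (X N \<omega>))\<^sup>2)"

definition slq_optimal ::
  "'w measure \<Rightarrow> (real \<Rightarrow> 'w \<Rightarrow> real) \<Rightarrow> real \<Rightarrow> nat \<Rightarrow> real \<Rightarrow> ('v::euclidean_space \<Rightarrow> 'v \<Rightarrow> real)
   \<Rightarrow> 'v \<Rightarrow> (nat \<Rightarrow> 'v) \<Rightarrow> (nat \<Rightarrow> 'w \<Rightarrow> 'v) \<Rightarrow> (nat \<Rightarrow> 'w \<Rightarrow> 'v) \<Rightarrow> bool" where
  "slq_optimal M W T N \<alpha> a x0 r X U \<longleftrightarrow>
     slq_admissible M W T N a x0 r X U \<and>
     (\<forall>X' U'. slq_admissible M W T N a x0 r X' U' \<longrightarrow>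
        slq_cost M T N \<alpha> X U \<le> slq_cost M T N \<alpha> X' U')"

definition K_op ::
  "'w measure \<Rightarrow> (real \<Rightarrow> 'w \<Rightarrow> real) \<Rightarrow> real \<Rightarrow> nat \<Rightarrow> real \<Rightarrow> ('v::euclidean_space \<Rightarrow> 'v \<Rightarrow> real)
   \<Rightarrow> (nat \<Rightarrow> 'w \<Rightarrow> 'v) \<Rightarrow> nat \<Rightarrow> 'w \<Rightarrow> 'v" where
  "K_op M W T N \<alpha> a X n = (\<lambda>\<omega>.
     - (T / real N) *\<^sub>R vec_cond_exp M (W_filtration M W (tgrid T N n))
         (\<lambda>\<omega>'. \<Sum>j\<in>{n+1..N}. (A0 a (T / real N) ^^ (j - n))
                  ((\<Prod>k\<in>{n+2..j}. 1 + dW W T N k \<omega>') *\<^sub>R X j \<omega>')) \<omega>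
     - \<alpha> *\<^sub>R vec_cond_exp M (W_filtration M W (tgrid T N n))
         (\<lambda>\<omega>'. (A0 a (T / real N) ^^ (N - n))
                  ((\<Prod>k\<in>{n+2..N}. 1 + dW W T N k \<omega>') *\<^sub>R X N \<omega>')) \<omega>)"

end

theory Submission
  imports Defs
begin

(* The implicit Euler step X(t_{n+1}) = A_0((1 + Delta_{n+1}W) X(t_n) + tau U(t_n) + Delta_{n+1}W R_h sigma(t_n))
   unrolls to the discrete variation-of-constants formula.  For the optimality condition, perturb the
   optimal control by e phi at a single time t_i, with phi bounded and F_{t_i}-measurable; the scheme is
   affine, so the state moves by e dX with dX(t_n) = tau A_0^{n-i} prod_{k=i+2}^n (1 + Delta_kW) phi for
   n > i.  The cost is then a quadratic polynomial in e minimised at e = 0, so its linear coefficient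
   vanishes.  Self-adjointness of A_0 and the defining property of conditional expectation identify this
   coefficient with tau E[(U(t_i) - (K X)(t_i)) . phi], and the choice phi = Z / (1 + |Z|) for
   Z = U(t_i) - (K X)(t_i) forces Z = 0 almost surely. *)

definition square_integrable :: "'a measure \<Rightarrow> ('a \<Rightarrow> 'b::euclidean_space) \<Rightarrow> bool" where
  "square_integrable M f \<longleftrightarrow> f \<in> borel_measurable M \<and> integrable M (\<lambda>x. (norm (f x))\<^sup>2)"

lemma abs_mult_le_sum_squares: "\<bar>a * b\<bar> \<le> a\<^sup>2 + (b::real)\<^sup>2"
proof -
  have "2 * \<bar>a\<bar> * \<bar>b\<bar> \<le> a\<^sup>2 + b\<^sup>2" using sum_squares_bound[of "\<bar>a\<bar>" "\<bar>b\<bar>"] by simp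
  then show ?thesis
    unfolding abs_mult using mult_nonneg_nonneg[OF abs_ge_zero[of a] abs_ge_zero[of b]] by linarith
qed

lemma integrable_inner_square_integrable:
  fixes f g :: "'a \<Rightarrow> 'b::euclidean_space"
  assumes "square_integrable M f" "square_integrable M g"
  shows "integrable M (\<lambda>x. f x \<bullet> g x)"
proof (rule Bochner_Integration.integrable_bound[of _ "\<lambda>x. (norm (f x))\<^sup>2 + (norm (g x))\<^sup>2"])
  have [measurable]: "f \<in> borel_measurable M" "g \<in> borel_measurable M"
    using assms unfolding square_integrable_def by auto
  show "integrable M (\<lambda>x. (norm (f x))\<^sup>2 + (norm (g x))\<^sup>2)"
    using assms unfolding square_integrable_def by auto
  show "(\<lambda>x. f x \<bullet> g x) \<in> borel_measurable M" by measurable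
  have "\<bar>f x \<bullet> g x\<bar> \<le> (norm (f x))\<^sup>2 + (norm (g x))\<^sup>2" for x
    using Cauchy_Schwarz_ineq2[of "f x" "g x"] abs_mult_le_sum_squares[of "norm (f x)" "norm (g x)"]
    by simp
  then show "AE x in M. norm (f x \<bullet> g x) \<le> norm ((norm (f x))\<^sup>2 + (norm (g x))\<^sup>2)" by simp
qed

lemma integrable_scaleR_square_integrable:
  fixes p :: "'a \<Rightarrow> real" and f :: "'a \<Rightarrow> 'b::euclidean_space"
  assumes "square_integrable M p" "square_integrable M f"
  shows "integrable M (\<lambda>x. p x *\<^sub>R f x)"
proof (rule Bochner_Integration.integrable_bound[of _ "\<lambda>x. (norm (p x))\<^sup>2 + (norm (f x))\<^sup>2"])
  have [measurable]: "p \<in> borel_measurable M" "f \<in> borel_measurable M"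
    using assms unfolding square_integrable_def by auto
  show "integrable M (\<lambda>x. (norm (p x))\<^sup>2 + (norm (f x))\<^sup>2)"
    using assms unfolding square_integrable_def by auto
  show "(\<lambda>x. p x *\<^sub>R f x) \<in> borel_measurable M" by measurable
  have "\<bar>p x\<bar> * norm (f x) \<le> (p x)\<^sup>2 + (norm (f x))\<^sup>2" for x
    using abs_mult_le_sum_squares[of "p x" "norm (f x)"] by (simp add: abs_mult)
  then show "AE x in M. norm (p x *\<^sub>R f x) \<le> norm ((norm (p x))\<^sup>2 + (norm (f x))\<^sup>2)" by simp
qed

lemma square_integrable_add:
  fixes f g :: "'a \<Rightarrow> 'b::euclidean_space"
  assumes "square_integrable M f" "square_integrable M g"
  shows "square_integrable M (\<lambda>x. f x + g x)"
  unfolding square_integrable_def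
proof
  have [measurable]: "f \<in> borel_measurable M" "g \<in> borel_measurable M"
    using assms unfolding square_integrable_def by auto
  show "(\<lambda>x. f x + g x) \<in> borel_measurable M" by measurable
  show "integrable M (\<lambda>x. (norm (f x + g x))\<^sup>2)"
  proof (rule Bochner_Integration.integrable_bound[of _ "\<lambda>x. 2 * (norm (f x))\<^sup>2 + 2 * (norm (g x))\<^sup>2"])
    show "integrable M (\<lambda>x. 2 * (norm (f x))\<^sup>2 + 2 * (norm (g x))\<^sup>2)"
      using assms unfolding square_integrable_def by auto
    have "(norm (f x + g x))\<^sup>2 \<le> 2 * (norm (f x))\<^sup>2 + 2 * (norm (g x))\<^sup>2" for x
    proof -
      have "(norm (f x + g x))\<^sup>2 \<le> (norm (f x) + norm (g x))\<^sup>2"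
        by (rule power_mono[OF norm_triangle_ineq norm_ge_zero])
      then show ?thesis
        using sum_squares_bound[of "norm (f x)" "norm (g x)"] by (simp add: power2_sum)
    qed
    then show "AE x in M. norm ((norm (f x + g x))\<^sup>2) \<le> norm (2 * (norm (f x))\<^sup>2 + 2 * (norm (g x))\<^sup>2)"
      by simp
  qed measurable
qed

lemma square_integrable_scaleR:
  "square_integrable M f \<Longrightarrow> square_integrable M (\<lambda>x. c *\<^sub>R f x)"
  unfolding square_integrable_def by (auto simp: power_mult_distrib)

lemma borel_measurable_linear:
  fixes f :: "'a::euclidean_space \<Rightarrow> 'b::euclidean_space"
  shows "linear f \<Longrightarrow> f \<in> borel_measurable borel"
  by (intro borel_measurable_continuous_onI linear_continuous_on) (simp add: linear_linear)

lemma square_integrable_linear: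
  fixes L :: "'b::euclidean_space \<Rightarrow> 'c::euclidean_space"
  assumes L: "linear L" and f: "square_integrable M f"
  shows "square_integrable M (\<lambda>x. L (f x))"
  unfolding square_integrable_def
proof
  have [measurable]: "f \<in> borel_measurable M" "L \<in> borel_measurable borel"
    using f borel_measurable_linear[OF L] unfolding square_integrable_def by simp_all
  show "(\<lambda>x. L (f x)) \<in> borel_measurable M" by measurable
  obtain C where C: "\<And>x. norm (L x) \<le> C * norm x" "C > 0"
    using linear_bounded_pos[OF L] by blast
  show "integrable M (\<lambda>x. (norm (L (f x)))\<^sup>2)"
  proof (rule Bochner_Integration.integrable_bound[of _ "\<lambda>x. C\<^sup>2 * (norm (f x))\<^sup>2"])
    show "integrable M (\<lambda>x. C\<^sup>2 * (norm (f x))\<^sup>2)"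
      using f unfolding square_integrable_def by auto
    have "(norm (L (f x)))\<^sup>2 \<le> (C * norm (f x))\<^sup>2" for x
      by (rule power_mono[OF C(1) norm_ge_zero])
    then show "AE x in M. norm ((norm (L (f x)))\<^sup>2) \<le> norm (C\<^sup>2 * (norm (f x))\<^sup>2)"
      by (simp add: power_mult_distrib)
  qed measurable
qed

lemma square_integrable_scaleR_bounded:
  fixes p :: "'a \<Rightarrow> real" and \<phi> :: "'a \<Rightarrow> 'b::euclidean_space"
  assumes "square_integrable M p" "\<phi> \<in> borel_measurable M" "\<And>x. norm (\<phi> x) \<le> 1"
  shows "square_integrable M (\<lambda>x. p x *\<^sub>R \<phi> x)"
  unfolding square_integrable_def
proof
  have [measurable]: "p \<in> borel_measurable M" "\<phi> \<in> borel_measurable M"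
    using assms unfolding square_integrable_def by auto
  show "(\<lambda>x. p x *\<^sub>R \<phi> x) \<in> borel_measurable M" by measurable
  show "integrable M (\<lambda>x. (norm (p x *\<^sub>R \<phi> x))\<^sup>2)"
  proof (rule Bochner_Integration.integrable_bound[of _ "\<lambda>x. (p x)\<^sup>2"])
    show "integrable M (\<lambda>x. (p x)\<^sup>2)" using assms(1) unfolding square_integrable_def by simp
    have "(norm (p x *\<^sub>R \<phi> x))\<^sup>2 \<le> (p x)\<^sup>2" for x
      using assms(3)[of x]
      by (simp add: power_mult_distrib mult_left_le abs_square_le_1 norm_ge_zero)
    then show "AE x in M. norm ((norm (p x *\<^sub>R \<phi> x))\<^sup>2) \<le> norm ((p x)\<^sup>2)" by simp
  qed measurable
qed

lemma (in finite_measure) integrable_square_integrable: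
  fixes f :: "'a \<Rightarrow> 'b::euclidean_space"
  assumes "square_integrable M f"
  shows "integrable M f"
proof (rule integrable_norm_cancel)
  have [measurable]: "f \<in> borel_measurable M" using assms unfolding square_integrable_def by simp
  show "integrable M (\<lambda>x. norm (f x))"
    by (rule square_integrable_imp_integrable) (use assms in \<open>simp_all add: square_integrable_def\<close>)
qed (use assms in \<open>simp add: square_integrable_def\<close>)

lemma integral_norm_add_scaleR_square:
  fixes f g :: "'a \<Rightarrow> 'b::euclidean_space"
  assumes "square_integrable M f" "square_integrable M g"
  shows "(\<integral>x. (norm (f x + e *\<^sub>R g x))\<^sup>2 \<partial>M) =
    (\<integral>x. (norm (f x))\<^sup>2 \<partial>M) + 2 * e * (\<integral>x. f x \<bullet> g x \<partial>M) + e\<^sup>2 * (\<integral>x. (norm (g x))\<^sup>2 \<partial>M)"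
proof -
  have "(norm (f x + e *\<^sub>R g x))\<^sup>2 = (norm (f x))\<^sup>2 + 2 * e * (f x \<bullet> g x) + e\<^sup>2 * (norm (g x))\<^sup>2" for x
    unfolding power2_norm_eq_inner
    by (simp add: inner_add_left inner_add_right inner_commute algebra_simps power2_eq_square)
  then show ?thesis
    using assms integrable_inner_square_integrable[OF assms] unfolding square_integrable_def by simp
qed

lemma integrable_inner_bounded:
  fixes f \<phi> :: "'a \<Rightarrow> 'b::euclidean_space"
  assumes "integrable M f" "\<phi> \<in> borel_measurable M" "\<And>x. norm (\<phi> x) \<le> 1"
  shows "integrable M (\<lambda>x. f x \<bullet> \<phi> x)"
proof (rule Bochner_Integration.integrable_bound[of _ "\<lambda>x. norm (f x)"])
  have [measurable]: "f \<in> borel_measurable M" "\<phi> \<in> borel_measurable M" using assms by auto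
  show "integrable M (\<lambda>x. norm (f x))" using assms(1) by simp
  show "(\<lambda>x. f x \<bullet> \<phi> x) \<in> borel_measurable M" by measurable
  have "\<bar>f x \<bullet> \<phi> x\<bar> \<le> norm (f x)" for x
    using Cauchy_Schwarz_ineq2[of "f x" "\<phi> x"] mult_left_le[OF assms(3) norm_ge_zero] by (rule order_trans)
  then show "AE x in M. norm (f x \<bullet> \<phi> x) \<le> norm (norm (f x))" by simp
qed

lemma AE_zero_if_integral_inner_zero:
  fixes Z :: "'a \<Rightarrow> 'b::euclidean_space"
  assumes Z: "integrable M Z" "Z \<in> borel_measurable F"
    and orth: "\<And>\<phi>. \<phi> \<in> borel_measurable F \<Longrightarrow> (\<And>x. norm (\<phi> x) \<le> 1) \<Longrightarrow> (\<integral>x. Z x \<bullet> \<phi> x \<partial>M) = 0"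
  shows "AE x in M. Z x = 0"
proof -
  define \<phi> where "\<phi> x = (1 / (1 + norm (Z x))) *\<^sub>R Z x" for x
  have bounded: "norm (\<phi> x) \<le> 1" for x
  proof -
    have "norm (\<phi> x) = norm (Z x) / (1 + norm (Z x))" by (simp add: \<phi>_def divide_inverse_commute)
    also have "\<dots> \<le> 1" by (simp add: add_pos_nonneg)
    finally show ?thesis .
  qed
  have [measurable]: "Z \<in> borel_measurable M" using Z(1) by simp
  have "\<phi> \<in> borel_measurable F" "\<phi> \<in> borel_measurable M"
    unfolding \<phi>_def using Z(2) by measurable
  have inner_\<phi>: "Z x \<bullet> \<phi> x = (norm (Z x))\<^sup>2 / (1 + norm (Z x))" for x
    by (simp add: \<phi>_def power2_norm_eq_inner divide_inverse_commute)
  have "integrable M (\<lambda>x. (norm (Z x))\<^sup>2 / (1 + norm (Z x)))"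
    using integrable_inner_bounded[OF Z(1) \<open>\<phi> \<in> borel_measurable M\<close> bounded] by (simp only: inner_\<phi>)
  moreover have "(\<integral>x. (norm (Z x))\<^sup>2 / (1 + norm (Z x)) \<partial>M) = 0"
    using orth[OF \<open>\<phi> \<in> borel_measurable F\<close> bounded] by (simp only: inner_\<phi>)
  ultimately have "AE x in M. (norm (Z x))\<^sup>2 / (1 + norm (Z x)) = 0"
    by (subst (asm) integral_nonneg_eq_0_iff_AE) auto
  then show ?thesis
    by eventually_elim (simp add: add_nonneg_eq_0_iff)
qed

lemma borel_measurable_vec_cond_exp [measurable]: "vec_cond_exp M F G \<in> borel_measurable F"
  unfolding vec_cond_exp_def by measurable

context sigma_finite_subalgebra
begin

lemma integrable_vec_cond_exp:
  fixes G :: "'a \<Rightarrow> 'b::euclidean_space"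
  assumes "integrable M G"
  shows "integrable M (vec_cond_exp M F G)"
  unfolding vec_cond_exp_def
  by (rule Bochner_Integration.integrable_sum, rule integrable_scaleR_left, rule real_cond_exp_int(1)) (use assms in auto)

lemma integral_inner_vec_cond_exp:
  fixes G \<phi> :: "'a \<Rightarrow> 'b::euclidean_space"
  assumes G: "integrable M G" and [measurable]: "\<phi> \<in> borel_measurable F"
    and bounded: "\<And>x. norm (\<phi> x) \<le> 1"
  shows "(\<integral>x. vec_cond_exp M F G x \<bullet> \<phi> x \<partial>M) = (\<integral>x. G x \<bullet> \<phi> x \<partial>M)"
proof -
  have [measurable]: "\<phi> \<in> borel_measurable M" by (rule measurable_from_subalg[OF subalg]) measurable
  have [measurable]: "G \<in> borel_measurable M" using G by simp
  have integrable_b: "integrable M (\<lambda>x. (\<phi> x \<bullet> b) * (G x \<bullet> b))" if b: "b \<in> Basis" for b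
  proof (rule Bochner_Integration.integrable_bound[of _ "\<lambda>x. G x \<bullet> b"])
    show "integrable M (\<lambda>x. G x \<bullet> b)" using G by auto
    have "\<bar>\<phi> x \<bullet> b\<bar> \<le> 1" for x using Basis_le_norm[OF b, of "\<phi> x"] bounded[of x] by linarith
    then show "AE x in M. norm ((\<phi> x \<bullet> b) * (G x \<bullet> b)) \<le> norm (G x \<bullet> b)"
      by (auto simp: abs_mult intro!: mult_left_le_one_le)
  qed measurable
  have "vec_cond_exp M F G x \<bullet> \<phi> x = (\<Sum>b\<in>Basis. (\<phi> x \<bullet> b) * real_cond_exp M F (\<lambda>y. G y \<bullet> b) x)" for x
    unfolding vec_cond_exp_def inner_sum_left inner_scaleR_left
    by (rule sum.cong[OF refl]) (simp add: inner_commute)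
  moreover have "G x \<bullet> \<phi> x = (\<Sum>b\<in>Basis. (\<phi> x \<bullet> b) * (G x \<bullet> b))" for x
    by (subst euclidean_inner) (simp add: mult.commute)
  ultimately show ?thesis
    using real_cond_exp_intg[OF integrable_b] integrable_b by (simp add: Bochner_Integration.integral_sum)
qed

end

section \<open>The resolvent of the discrete Laplacian\<close>

lemma linear_funpow:
  fixes f :: "'a::real_vector \<Rightarrow> 'a"
  shows "linear f \<Longrightarrow> linear (f ^^ n)"
proof (induction n)
  case (Suc n)
  then show ?case using linear_compose[of "f ^^ n" f] by (simp add: comp_def)
qed (simp add: linear_id)

lemma funpow_self_adjoint:
  assumes "\<And>x y. f x \<bullet> y = x \<bullet> f y"
  shows "(f ^^ n) x \<bullet> y = x \<bullet> (f ^^ n) y"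
proof (induction n arbitrary: y)
  case (Suc n)
  have "(f ^^ Suc n) x \<bullet> y = (f ^^ n) x \<bullet> f y" by (simp add: assms)
  also have "\<dots> = x \<bullet> (f ^^ Suc n) y" by (simp add: Suc funpow_swap1)
  finally show ?case .
qed simp

lemma inner_disc_lap:
  fixes a :: "'v::euclidean_space \<Rightarrow> 'v \<Rightarrow> real"
  assumes "grad_form a"
  shows "disc_lap a x \<bullet> y = - a x y"
proof -
  define c where "c = - (\<Sum>b\<in>Basis. a x b *\<^sub>R b)"
  have lin: "linear (a x)" using assms unfolding grad_form_def bilinear_def by simp
  have c: "- (c \<bullet> y) = a x y" for y
  proof -
    have "a x y = a x (\<Sum>b\<in>Basis. (y \<bullet> b) *\<^sub>R b)" by (simp add: euclidean_representation)
    also have "\<dots> = (\<Sum>b\<in>Basis. (y \<bullet> b) * a x b)"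
      by (simp add: linear_sum[OF lin] linear_scale[OF lin])
    also have "\<dots> = (\<Sum>b\<in>Basis. a x b * (b \<bullet> y))"
      by (rule sum.cong) (simp_all add: inner_commute)
    also have "\<dots> = - (c \<bullet> y)" by (simp add: c_def inner_sum_left)
    finally show ?thesis by simp
  qed
  have "disc_lap a x = c"
    unfolding disc_lap_def
  proof (rule the_equality)
    fix y assume y: "\<forall>\<phi>. - (y \<bullet> \<phi>) = a x \<phi>"
    have "y \<bullet> b = c \<bullet> b" for b using spec[OF y, of b] c[of b] by linarith
    then show "y = c" by (rule euclidean_eqI)
  qed (simp add: c)
  then show ?thesis using c[of y] by simp
qed

lemma linear_disc_lap:
  fixes a :: "'v::euclidean_space \<Rightarrow> 'v \<Rightarrow> real"
  assumes "grad_form a"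
  shows "linear (disc_lap a)"
proof -
  have lin: "linear (\<lambda>x. a x y)" for y using assms unfolding grad_form_def bilinear_def by simp
  show ?thesis
  proof (rule linearI)
    show "disc_lap a (x + y) = disc_lap a x + disc_lap a y" for x y
      by (rule euclidean_eqI) (simp add: inner_disc_lap[OF assms] inner_add_left linear_add[OF lin])
    show "disc_lap a (c *\<^sub>R x) = c *\<^sub>R disc_lap a x" for c x
      by (rule euclidean_eqI) (simp add: inner_disc_lap[OF assms] linear_scale[OF lin])
  qed
qed

locale resolvent =
  fixes a :: "'v::euclidean_space \<Rightarrow> 'v \<Rightarrow> real" and \<tau> :: real
  assumes grad_form: "grad_form a" and nonneg: "\<tau> \<ge> 0"
begin

abbreviation implicit_op :: "'v \<Rightarrow> 'v" where
  "implicit_op x \<equiv> x - \<tau> *\<^sub>R disc_lap a x"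

lemma linear_implicit_op: "linear implicit_op"
  using linear_disc_lap[OF grad_form] by (intro linearI) (auto simp: linear_add linear_scale algebra_simps)

lemma inner_implicit_op: "implicit_op x \<bullet> y = x \<bullet> y + \<tau> * a x y"
  by (simp add: inner_diff_left inner_disc_lap[OF grad_form])

lemma bij_implicit_op: "bij implicit_op"
proof -
  have "x = 0" if "implicit_op x = 0" for x
  proof (rule ccontr)
    assume "x \<noteq> 0"
    moreover have "a x x > 0" using grad_form \<open>x \<noteq> 0\<close> unfolding grad_form_def by blast
    ultimately have "0 < x \<bullet> x + \<tau> * a x x" using nonneg by (intro add_pos_nonneg) auto
    then show False using that inner_implicit_op[of x x] by simp
  qed
  then have "inj implicit_op" using linear_injective_0[OF linear_implicit_op] by blast
  then show ?thesis using linear_injective_imp_surjective[OF linear_implicit_op] by (simp add: bij_def)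
qed

lemma A0_implicit_op: "A0 a \<tau> (implicit_op x) = x"
  unfolding A0_def by (rule inv_f_f[OF bij_is_inj[OF bij_implicit_op]])

lemma implicit_op_A0: "implicit_op (A0 a \<tau> y) = y"
  unfolding A0_def by (rule surj_f_inv_f[OF bij_is_surj[OF bij_implicit_op]])

lemma linear_A0: "linear (A0 a \<tau>)"
  unfolding A0_def by (rule inj_linear_imp_inv_linear[OF linear_implicit_op bij_is_inj[OF bij_implicit_op]])

lemma A0_self_adjoint: "A0 a \<tau> x \<bullet> y = x \<bullet> A0 a \<tau> y"
proof -
  have "A0 a \<tau> x \<bullet> y = implicit_op (A0 a \<tau> y) \<bullet> A0 a \<tau> x"
    by (simp add: implicit_op_A0 inner_commute)
  also have "\<dots> = implicit_op (A0 a \<tau> x) \<bullet> A0 a \<tau> y"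
    using grad_form unfolding inner_implicit_op grad_form_def by (simp add: inner_commute)
  finally show ?thesis by (simp add: implicit_op_A0)
qed

lemma implicit_step_iff:
  "y - x = \<tau> *\<^sub>R (disc_lap a y + u) + d *\<^sub>R (x + r) \<longleftrightarrow>
   y = A0 a \<tau> ((1 + d) *\<^sub>R x + \<tau> *\<^sub>R u + d *\<^sub>R r)"
proof -
  have "y - x = \<tau> *\<^sub>R (disc_lap a y + u) + d *\<^sub>R (x + r) \<longleftrightarrow>
        implicit_op y = (1 + d) *\<^sub>R x + \<tau> *\<^sub>R u + d *\<^sub>R r"
    by (auto simp: algebra_simps)
  also have "\<dots> \<longleftrightarrow> y = A0 a \<tau> ((1 + d) *\<^sub>R x + \<tau> *\<^sub>R u + d *\<^sub>R r)"
    using A0_implicit_op implicit_op_A0 by metis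
  finally show ?thesis .
qed

lemma implicit_step_add_scaleR:
  assumes "y - x = \<tau> *\<^sub>R (disc_lap a y + u) + d *\<^sub>R (x + r)"
    and "y' - x' = \<tau> *\<^sub>R (disc_lap a y' + u') + d *\<^sub>R x'"
  shows "y + e *\<^sub>R y' - (x + e *\<^sub>R x')
    = \<tau> *\<^sub>R (disc_lap a (y + e *\<^sub>R y') + (u + e *\<^sub>R u')) + d *\<^sub>R (x + e *\<^sub>R x' + r)"
proof -
  have "y + e *\<^sub>R y' - (x + e *\<^sub>R x') = (y - x) + e *\<^sub>R (y' - x')" by (simp add: algebra_simps)
  also have "\<dots> = \<tau> *\<^sub>R (disc_lap a (y + e *\<^sub>R y') + (u + e *\<^sub>R u')) + d *\<^sub>R (x + e *\<^sub>R x' + r)"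
    unfolding assms using linear_disc_lap[OF grad_form] by (simp add: linear_add linear_scale algebra_simps)
  finally show ?thesis .
qed

end

section \<open>Discrete variation of constants\<close>

lemma discrete_variation_of_constants:
  fixes A :: "'v::real_vector \<Rightarrow> 'v"
  assumes A: "linear A"
    and step: "\<And>n. n < m \<Longrightarrow> x (Suc n) = A ((1 + d (Suc n)) *\<^sub>R x n + w n)"
  shows "x m = (A ^^ m) ((\<Prod>j\<in>{1..m}. 1 + d j) *\<^sub>R x 0)
    + (\<Sum>j<m. (A ^^ (m - j)) ((\<Prod>k\<in>{j+2..m}. 1 + d k) *\<^sub>R w j))"
  using step
proof (induction m)
  case (Suc m)
  define c where "c = 1 + d (Suc m)"
  have prod_Suc: "(\<Prod>k\<in>{j..Suc m}. 1 + d k) = c * (\<Prod>k\<in>{j..m}. 1 + d k)" if "j \<le> Suc m" for j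
    using that by (simp add: c_def atLeastAtMostSuc_conv)
  have push: "A (c *\<^sub>R (A ^^ k) z) = (A ^^ Suc k) (c *\<^sub>R z)" for k z
    by (simp add: linear_scale[OF A] linear_scale[OF linear_funpow[OF A]])
  have "x (Suc m) = A (c *\<^sub>R x m + w m)" using Suc.prems[of m] by (simp add: c_def)
  also have "\<dots> = A (c *\<^sub>R (A ^^ m) ((\<Prod>j\<in>{1..m}. 1 + d j) *\<^sub>R x 0))
      + (\<Sum>j<m. A (c *\<^sub>R (A ^^ (m - j)) ((\<Prod>k\<in>{j+2..m}. 1 + d k) *\<^sub>R w j))) + A (w m)"
    using Suc by (simp add: linear_add[OF A] linear_sum[OF A] scaleR_add_right scaleR_sum_right)
  also have "\<dots> = (A ^^ Suc m) ((\<Prod>j\<in>{1..Suc m}. 1 + d j) *\<^sub>R x 0)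
      + (\<Sum>j<Suc m. (A ^^ (Suc m - j)) ((\<Prod>k\<in>{j+2..Suc m}. 1 + d k) *\<^sub>R w j))"
  proof -
    have "A (c *\<^sub>R (A ^^ (m - j)) ((\<Prod>k\<in>{j+2..m}. 1 + d k) *\<^sub>R w j))
        = (A ^^ (Suc m - j)) ((\<Prod>k\<in>{j+2..Suc m}. 1 + d k) *\<^sub>R w j)" if "j < m" for j
    proof -
      have "Suc m - j = Suc (m - j)" using that by simp
      then show ?thesis using prod_Suc[of "j + 2"] that by (simp only: push scaleR_scaleR)
    qed
    moreover have "A (c *\<^sub>R (A ^^ m) ((\<Prod>j\<in>{1..m}. 1 + d j) *\<^sub>R x 0))
        = (A ^^ Suc m) ((\<Prod>j\<in>{1..Suc m}. 1 + d j) *\<^sub>R x 0)"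
      using prod_Suc[of 1] by (simp only: push scaleR_scaleR)
    ultimately show ?thesis by simp
  qed
  finally show ?case .
qed simp

locale wiener_grid =
  fixes M :: "'w measure" and W :: "real \<Rightarrow> 'w \<Rightarrow> real" and T :: real and N :: nat
  assumes prob_space: "prob_space M" and wiener: "wiener_process M T W"
    and T_pos: "T > 0" and N_pos: "N > 0"
begin

abbreviation \<tau> :: real where "\<tau> \<equiv> T / real N"

abbreviation \<F> :: "nat \<Rightarrow> 'w measure" where "\<F> n \<equiv> W_filtration M W (tgrid T N n)"

lemma tau_pos: "\<tau> > 0"
  using T_pos N_pos by simp

lemma tgrid_nonneg: "tgrid T N n \<ge> 0"
  unfolding tgrid_def using T_pos by simp

lemma tgrid_le_T: "n \<le> N \<Longrightarrow> tgrid T N n \<le> T"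
  unfolding tgrid_def using T_pos N_pos by (simp add: field_simps)

lemma tgrid_mono: "m \<le> n \<Longrightarrow> tgrid T N m \<le> tgrid T N n"
  unfolding tgrid_def using T_pos by (intro mult_right_mono) auto

lemma tgrid_Suc: "tgrid T N (Suc n) = tgrid T N n + \<tau>"
  unfolding tgrid_def by (simp add: algebra_simps add_divide_distrib)

lemma W_measurable: "s \<in> {0..T} \<Longrightarrow> W s \<in> borel_measurable M"
  using wiener unfolding wiener_process_def by blast

definition W_generators :: "real \<Rightarrow> 'w set set" where
  "W_generators t = {W s -` B \<inter> space M | s B. s \<in> {0..t} \<and> B \<in> sets borel} \<union> null_sets M"

lemma W_generators_mono: "s \<le> t \<Longrightarrow> W_generators s \<subseteq> W_generators t"
proof -
  assume "s \<le> t"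
  then have "{W u -` B \<inter> space M | u B. u \<in> {0..s} \<and> B \<in> sets borel}
     \<subseteq> {W u -` B \<inter> space M | u B. u \<in> {0..t} \<and> B \<in> sets borel}" by force
  then show ?thesis unfolding W_generators_def by blast
qed

lemma W_generators_sets: "t \<le> T \<Longrightarrow> W_generators t \<subseteq> sets M"
proof -
  assume "t \<le> T"
  then have "W s -` B \<inter> space M \<in> sets M" if "s \<in> {0..t}" "B \<in> sets borel" for s B
    using W_measurable[of s] that measurable_sets by fastforce
  then show ?thesis unfolding W_generators_def by (auto simp: null_sets_def)
qed

lemma W_generators_Pow: "t \<le> T \<Longrightarrow> W_generators t \<subseteq> Pow (space M)"
  using W_generators_sets sets.space_closed by blast

lemma sets_W_filtration: "t \<le> T \<Longrightarrow> sets (W_filtration M W t) = sigma_sets (space M) (W_generators t)"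
  unfolding W_filtration_def W_generators_def[symmetric] by (rule sets_measure_of[OF W_generators_Pow])

lemma space_W_filtration: "t \<le> T \<Longrightarrow> space (W_filtration M W t) = space M"
  unfolding W_filtration_def W_generators_def[symmetric] by (rule space_measure_of[OF W_generators_Pow])

lemma subalgebra_W_filtration: "t \<le> T \<Longrightarrow> subalgebra M (W_filtration M W t)"
  by (simp add: subalgebra_def space_W_filtration sets_W_filtration sets.sigma_sets_subset W_generators_sets)

lemma W_filtration_mono: "s \<le> t \<Longrightarrow> t \<le> T \<Longrightarrow> subalgebra (W_filtration M W t) (W_filtration M W s)"
  by (simp add: subalgebra_def space_W_filtration sets_W_filtration sigma_sets_mono' W_generators_mono)

lemma W_measurable_W_filtration:
  assumes "0 \<le> s" "s \<le> t" "t \<le> T"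
  shows "W s \<in> borel_measurable (W_filtration M W t)"
proof (rule measurableI)
  fix B :: "real set" assume "B \<in> sets borel"
  then have "W s -` B \<inter> space M \<in> {W u -` C \<inter> space M | u C. u \<in> {0..t} \<and> C \<in> sets borel}"
    using assms by auto
  then have "W s -` B \<inter> space M \<in> sigma_sets (space M) (W_generators t)"
    unfolding W_generators_def by (intro sigma_sets.Basic UnI1)
  then show "W s -` B \<inter> space (W_filtration M W t) \<in> sets (W_filtration M W t)"
    using assms by (simp add: sets_W_filtration space_W_filtration)
qed simp

lemma measurable_grid_filtration_mono:
  "m \<le> n \<Longrightarrow> n \<le> N \<Longrightarrow> f \<in> measurable (\<F> m) K \<Longrightarrow> f \<in> measurable (\<F> n) K"
  by (rule measurable_from_subalg[OF W_filtration_mono[OF tgrid_mono tgrid_le_T]])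

lemma measurable_grid_filtration_M: "n \<le> N \<Longrightarrow> f \<in> measurable (\<F> n) K \<Longrightarrow> f \<in> measurable M K"
  by (rule measurable_from_subalg[OF subalgebra_W_filtration[OF tgrid_le_T]])

lemma sigma_finite_subalgebra_grid: "n \<le> N \<Longrightarrow> sigma_finite_subalgebra M (\<F> n)"
  using prob_space subalgebra_W_filtration[OF tgrid_le_T]
  by (intro finite_measure_subalgebra_is_sigma_finite)
     (simp add: finite_measure_subalgebra_def finite_measure_subalgebra_axioms_def prob_space_def)

lemma dW_measurable:
  assumes "1 \<le> k" "k \<le> n" "n \<le> N"
  shows "dW W T N k \<in> borel_measurable (\<F> n)"
proof -
  have [measurable]: "W (tgrid T N k) \<in> borel_measurable (\<F> n)" "W (tgrid T N (k - 1)) \<in> borel_measurable (\<F> n)"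
    using assms by (auto intro!: W_measurable_W_filtration tgrid_nonneg tgrid_mono tgrid_le_T)
  show ?thesis unfolding dW_def[abs_def] by measurable
qed

lemma dW_distributed:
  assumes "1 \<le> k" "k \<le> N"
  shows "distributed M lborel (dW W T N k) (\<lambda>x. ennreal (normal_density 0 (sqrt \<tau>) x))"
proof -
  have k: "tgrid T N k - tgrid T N (k - 1) = \<tau>" using assms tgrid_Suc[of "k - 1"] by simp
  have "tgrid T N (k - 1) < tgrid T N k" "tgrid T N k \<le> T" 
    using k tau_pos tgrid_le_T assms by auto
  then have "distributed M lborel (\<lambda>\<omega>. W (tgrid T N k) \<omega> - W (tgrid T N (k - 1)) \<omega>)
     (\<lambda>x. ennreal (normal_density 0 (sqrt (tgrid T N k - tgrid T N (k - 1))) x))"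
    using wiener tgrid_nonneg unfolding wiener_process_def by blast
  then show ?thesis unfolding k dW_def[abs_def] .
qed

lemma integrable_one_plus_dW_square:
  assumes "1 \<le> k" "k \<le> N"
  shows "integrable M (\<lambda>\<omega>. (1 + dW W T N k \<omega>)\<^sup>2)"
proof -
  define s where "s = sqrt \<tau>"
  have s: "s > 0" unfolding s_def using tau_pos by simp
  have "integrable lborel (\<lambda>x. normal_density 0 s x)"
    using integrable.intros[OF normal_moment_even[OF s, where k=0 and \<mu>=0]] by simp
  moreover have "integrable lborel (\<lambda>x. normal_density 0 s x * x)"
    using integrable.intros[OF normal_moment_odd[OF s, where k=0 and \<mu>=0]] by simp
  moreover have "integrable lborel (\<lambda>x. normal_density 0 s x * x\<^sup>2)"
    using integrable.intros[OF normal_moment_even[OF s, where k=1 and \<mu>=0]] by simp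
  ultimately have "integrable lborel (\<lambda>x. normal_density 0 s x + 2 * (normal_density 0 s x * x)
      + normal_density 0 s x * x\<^sup>2)"
    by auto
  then have "integrable lborel (\<lambda>x. normal_density 0 s x * (1 + x)\<^sup>2)"
    by (simp add: power2_eq_square algebra_simps)
  then show ?thesis
    using distributed_integrable[OF dW_distributed[OF assms, folded s_def], of "\<lambda>x. (1 + x)\<^sup>2"]
    by (simp add: normal_density_nonneg)
qed

lemma indep_dW: "prob_space.indep_vars M (\<lambda>_. borel) (\<lambda>l. dW W T N (Suc l)) {..<N}"
proof -
  have "\<forall>l<N. tgrid T N l < tgrid T N (Suc l)" using tgrid_Suc tau_pos by simp
  then show ?thesis
    using wiener tgrid_nonneg[of 0] tgrid_le_T[of N] unfolding wiener_process_def dW_def[abs_def] by simp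
qed

definition noise_prod :: "nat \<Rightarrow> nat \<Rightarrow> 'w \<Rightarrow> real" where
  "noise_prod i j \<omega> = (\<Prod>k\<in>{i+2..j}. 1 + dW W T N k \<omega>)"

lemma noise_prod_self: "noise_prod i (Suc i) \<omega> = 1"
  by (simp add: noise_prod_def)

lemma noise_prod_Suc: "i < j \<Longrightarrow> noise_prod i (Suc j) \<omega> = (1 + dW W T N (Suc j) \<omega>) * noise_prod i j \<omega>"
  by (simp add: noise_prod_def atLeastAtMostSuc_conv)

lemma noise_prod_measurable: "j \<le> n \<Longrightarrow> n \<le> N \<Longrightarrow> noise_prod i j \<in> borel_measurable (\<F> n)"
proof -
  assume "j \<le> n" "n \<le> N"
  then have [measurable]: "k \<in> {i+2..j} \<Longrightarrow> dW W T N k \<in> borel_measurable (\<F> n)" for k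
    by (intro dW_measurable) auto
  show ?thesis unfolding noise_prod_def[abs_def] by measurable
qed

lemma square_integrable_noise_prod:
  assumes "j \<le> N"
  shows "square_integrable M (noise_prod i j)"
  unfolding square_integrable_def
proof
  interpret prob_space M by (rule prob_space)
  show "noise_prod i j \<in> borel_measurable M"
    by (rule measurable_grid_filtration_M[OF assms noise_prod_measurable[OF order.refl assms]])
  have "indep_vars (\<lambda>_. borel) (\<lambda>l \<omega>. (\<lambda>x. (1 + x)\<^sup>2) (dW W T N (Suc l) \<omega>)) {..<N}"
    by (rule indep_vars_compose2[OF indep_dW]) simp
  then have "indep_vars (\<lambda>_. borel) (\<lambda>l \<omega>. (1 + dW W T N (Suc l) \<omega>)\<^sup>2) {i+1..<j}"
    by (rule indep_vars_subset) (use assms in auto)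
  then have "integrable M (\<lambda>\<omega>. \<Prod>l\<in>{i+1..<j}. (1 + dW W T N (Suc l) \<omega>)\<^sup>2)"
    by (rule indep_vars_integrable[rotated]) (use assms integrable_one_plus_dW_square in auto)
  moreover have "(\<Prod>l\<in>{i+1..<j}. (1 + dW W T N (Suc l) \<omega>)\<^sup>2) = (noise_prod i j \<omega>)\<^sup>2" for \<omega>
  proof -
    have "{i+2..j} = Suc ` {i+1..<j}"
      by (simp add: image_Suc_atLeastLessThan atLeastLessThanSuc_atLeastAtMost)
    then have "(\<Prod>k\<in>{i+2..j}. (1 + dW W T N k \<omega>)\<^sup>2) = (\<Prod>l\<in>{i+1..<j}. (1 + dW W T N (Suc l) \<omega>)\<^sup>2)"
      by (simp only: prod.reindex[of Suc, unfolded o_def] inj_Suc inj_on_subset subset_UNIV)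
    then show ?thesis
      unfolding noise_prod_def by (simp add: prod_power_distrib)
  qed
  ultimately show "integrable M (\<lambda>\<omega>. (norm (noise_prod i j \<omega>))\<^sup>2)" by simp
qed

end

section \<open>First variation of the discrete cost\<close>

definition slq_cost_inner ::
  "'w measure \<Rightarrow> real \<Rightarrow> nat \<Rightarrow> real \<Rightarrow> (nat \<Rightarrow> 'w \<Rightarrow> 'v::euclidean_space) \<Rightarrow> (nat \<Rightarrow> 'w \<Rightarrow> 'v)
   \<Rightarrow> (nat \<Rightarrow> 'w \<Rightarrow> 'v) \<Rightarrow> (nat \<Rightarrow> 'w \<Rightarrow> 'v) \<Rightarrow> real" where
  "slq_cost_inner M T N \<alpha> X U X' U' =
     (T / real N) * (\<Sum>n\<in>{1..N}. \<integral>\<omega>. X n \<omega> \<bullet> X' n \<omega> \<partial>M)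
     + (T / real N) * (\<Sum>n<N. \<integral>\<omega>. U n \<omega> \<bullet> U' n \<omega> \<partial>M)
     + \<alpha> * (\<integral>\<omega>. X N \<omega> \<bullet> X' N \<omega> \<partial>M)"

lemma slq_cost_add_scaleR:
  assumes X: "\<And>n. n \<le> N \<Longrightarrow> square_integrable M (X n)" "\<And>n. n \<le> N \<Longrightarrow> square_integrable M (X' n)"
    and U: "\<And>n. n < N \<Longrightarrow> square_integrable M (U n)" "\<And>n. n < N \<Longrightarrow> square_integrable M (U' n)"
  shows "slq_cost M T N \<alpha> (\<lambda>n \<omega>. X n \<omega> + e *\<^sub>R X' n \<omega>) (\<lambda>n \<omega>. U n \<omega> + e *\<^sub>R U' n \<omega>)
    = slq_cost M T N \<alpha> X U + e * slq_cost_inner M T N \<alpha> X U X' U' + e\<^sup>2 * slq_cost M T N \<alpha> X' U'"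
proof -
  have "(\<Sum>n\<in>{1..N}. \<integral>\<omega>. (norm (X n \<omega> + e *\<^sub>R X' n \<omega>))\<^sup>2 \<partial>M)
      = (\<Sum>n\<in>{1..N}. \<integral>\<omega>. (norm (X n \<omega>))\<^sup>2 \<partial>M) + 2 * e * (\<Sum>n\<in>{1..N}. \<integral>\<omega>. X n \<omega> \<bullet> X' n \<omega> \<partial>M)
        + e\<^sup>2 * (\<Sum>n\<in>{1..N}. \<integral>\<omega>. (norm (X' n \<omega>))\<^sup>2 \<partial>M)"
    by (simp add: integral_norm_add_scaleR_square X sum.distrib sum_distrib_left)
  moreover have "(\<Sum>n<N. \<integral>\<omega>. (norm (U n \<omega> + e *\<^sub>R U' n \<omega>))\<^sup>2 \<partial>M)
      = (\<Sum>n<N. \<integral>\<omega>. (norm (U n \<omega>))\<^sup>2 \<partial>M) + 2 * e * (\<Sum>n<N. \<integral>\<omega>. U n \<omega> \<bullet> U' n \<omega> \<partial>M)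
        + e\<^sup>2 * (\<Sum>n<N. \<integral>\<omega>. (norm (U' n \<omega>))\<^sup>2 \<partial>M)"
    by (simp add: integral_norm_add_scaleR_square U sum.distrib sum_distrib_left)
  moreover have "(\<integral>\<omega>. (norm (X N \<omega> + e *\<^sub>R X' N \<omega>))\<^sup>2 \<partial>M)
      = (\<integral>\<omega>. (norm (X N \<omega>))\<^sup>2 \<partial>M) + 2 * e * (\<integral>\<omega>. X N \<omega> \<bullet> X' N \<omega> \<partial>M)
        + e\<^sup>2 * (\<integral>\<omega>. (norm (X' N \<omega>))\<^sup>2 \<partial>M)"
    by (simp add: integral_norm_add_scaleR_square X)
  ultimately show ?thesis
    unfolding slq_cost_def slq_cost_inner_def by (simp add: algebra_simps)
qed

lemma nonneg_quadratic_imp_linear_coeff_zero: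
  fixes L Q :: real
  assumes "\<And>e. 0 \<le> e * L + e\<^sup>2 * Q"
  shows "L = 0"
proof -
  define c where "c = \<bar>Q\<bar> + 1"
  have c: "c > 0" "Q - c < 0" by (auto simp: c_def)
  have "0 \<le> (- L / c) * L + (- L / c)\<^sup>2 * Q" by (rule assms)
  also have "\<dots> = L\<^sup>2 * (Q - c) / c\<^sup>2" using c by (simp add: field_simps power2_eq_square)
  finally have "0 \<le> L\<^sup>2 * (Q - c)" using c by (simp add: zero_le_divide_iff)
  then have "L\<^sup>2 \<le> 0" using c by (simp add: zero_le_mult_iff)
  then show ?thesis by simp
qed

locale slq_grid = wiener_grid M W T N for M :: "'w measure" and W T N +
  fixes a :: "'v::euclidean_space \<Rightarrow> 'v \<Rightarrow> real"
  assumes grad_form_a: "grad_form a"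

sublocale slq_grid \<subseteq> resolvent a "T / real N"
  using grad_form_a tau_pos by unfold_locales auto

context slq_grid
begin

lemma slq_admissible_square_integrable:
  assumes "slq_admissible M W T N a x0 r X U"
  shows "n \<le> N \<Longrightarrow> square_integrable M (X n)" and "n < N \<Longrightarrow> square_integrable M (U n)"
  using assms measurable_grid_filtration_M
  unfolding slq_admissible_def square_integrable_def by (meson less_imp_le)+

lemma slq_admissible_variation_of_constants:
  assumes adm: "slq_admissible M W T N a x0 r X U" and n: "n < N" and \<omega>: "\<omega> \<in> space M"
  shows "X (Suc n) \<omega> =
      (A0 a \<tau> ^^ (n + 1)) ((\<Prod>j\<in>{1..n+1}. 1 + dW W T N j \<omega>) *\<^sub>R X 0 \<omega>)
    + \<tau> *\<^sub>R (\<Sum>j\<in>{0..n}. (A0 a \<tau> ^^ (n + 1 - j))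
        ((\<Prod>k\<in>{j+2..n+1}. 1 + dW W T N k \<omega>) *\<^sub>R U j \<omega>))
    + (\<Sum>j\<in>{0..n}. (A0 a \<tau> ^^ (n + 1 - j))
        ((\<Prod>k\<in>{j+2..n+1}. 1 + dW W T N k \<omega>) *\<^sub>R (dW W T N (j + 1) \<omega> *\<^sub>R r j)))"
proof -
  let ?d = "\<lambda>k. dW W T N k \<omega>"
  let ?q = "\<lambda>j. \<Prod>k\<in>{j+2..Suc n}. 1 + ?d k"
  have "X (Suc m) \<omega> = A0 a \<tau> ((1 + ?d (Suc m)) *\<^sub>R X m \<omega> + (\<tau> *\<^sub>R U m \<omega> + ?d (Suc m) *\<^sub>R r m))"
    if "m < Suc n" for m
    using adm that n \<omega> unfolding slq_admissible_def implicit_step_iff by (simp add: add.assoc)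
  then have "X (Suc n) \<omega> = (A0 a \<tau> ^^ Suc n) ((\<Prod>j\<in>{1..Suc n}. 1 + ?d j) *\<^sub>R X 0 \<omega>)
      + (\<Sum>j<Suc n. (A0 a \<tau> ^^ (Suc n - j)) (?q j *\<^sub>R (\<tau> *\<^sub>R U j \<omega> + ?d (Suc j) *\<^sub>R r j)))"
    by (rule discrete_variation_of_constants[OF linear_A0])
  also have "(\<Sum>j<Suc n. (A0 a \<tau> ^^ (Suc n - j)) (?q j *\<^sub>R (\<tau> *\<^sub>R U j \<omega> + ?d (Suc j) *\<^sub>R r j)))
      = \<tau> *\<^sub>R (\<Sum>j<Suc n. (A0 a \<tau> ^^ (Suc n - j)) (?q j *\<^sub>R U j \<omega>))
        + (\<Sum>j<Suc n. (A0 a \<tau> ^^ (Suc n - j)) (?q j *\<^sub>R (?d (Suc j) *\<^sub>R r j)))"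
  proof -
    have "(A0 a \<tau> ^^ k) (q *\<^sub>R (\<tau> *\<^sub>R u + d *\<^sub>R \<rho>))
        = \<tau> *\<^sub>R (A0 a \<tau> ^^ k) (q *\<^sub>R u) + (A0 a \<tau> ^^ k) (q *\<^sub>R (d *\<^sub>R \<rho>))" for k q u d \<rho>
      using linear_funpow[OF linear_A0, of k]
      by (simp add: linear_add linear_scale scaleR_add_right)
    then show ?thesis by (simp only: sum.distrib scaleR_sum_right)
  qed
  finally show ?thesis by (simp add: lessThan_Suc_atMost atLeast0AtMost add.assoc)
qed

lemma slq_admissible_add_scaleR:
  assumes adm: "slq_admissible M W T N a x0 r X U"
    and hom: "slq_admissible M W T N a 0 (\<lambda>_. 0) X' U'"
  shows "slq_admissible M W T N a x0 r (\<lambda>n \<omega>. X n \<omega> + e *\<^sub>R X' n \<omega>) (\<lambda>n \<omega>. U n \<omega> + e *\<^sub>R U' n \<omega>)"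
  unfolding slq_admissible_def
proof (intro conjI allI impI ballI)
  fix n assume n: "n < N"
  have [measurable]: "U n \<in> borel_measurable (\<F> n)" "U' n \<in> borel_measurable (\<F> n)"
    using adm hom n unfolding slq_admissible_def by auto
  show "(\<lambda>\<omega>. U n \<omega> + e *\<^sub>R U' n \<omega>) \<in> borel_measurable (\<F> n)" by measurable
  show "integrable M (\<lambda>\<omega>. (norm (U n \<omega> + e *\<^sub>R U' n \<omega>))\<^sup>2)"
    using square_integrable_add[OF slq_admissible_square_integrable(2)[OF adm n]
        square_integrable_scaleR[OF slq_admissible_square_integrable(2)[OF hom n]]]
    unfolding square_integrable_def by simp
next
  fix n assume n: "n \<le> N"
  have [measurable]: "X n \<in> borel_measurable (\<F> n)" "X' n \<in> borel_measurable (\<F> n)"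
    using adm hom n unfolding slq_admissible_def by auto
  show "(\<lambda>\<omega>. X n \<omega> + e *\<^sub>R X' n \<omega>) \<in> borel_measurable (\<F> n)" by measurable
  show "integrable M (\<lambda>\<omega>. (norm (X n \<omega> + e *\<^sub>R X' n \<omega>))\<^sup>2)"
    using square_integrable_add[OF slq_admissible_square_integrable(1)[OF adm n]
        square_integrable_scaleR[OF slq_admissible_square_integrable(1)[OF hom n]]]
    unfolding square_integrable_def by simp
next
  fix \<omega> assume "\<omega> \<in> space M"
  then show "X 0 \<omega> + e *\<^sub>R X' 0 \<omega> = x0" using adm hom unfolding slq_admissible_def by simp
next
  fix n \<omega> assume "n < N" "\<omega> \<in> space M"
  then show "X (Suc n) \<omega> + e *\<^sub>R X' (Suc n) \<omega> - (X n \<omega> + e *\<^sub>R X' n \<omega>)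
      = \<tau> *\<^sub>R (disc_lap a (X (Suc n) \<omega> + e *\<^sub>R X' (Suc n) \<omega>) + (U n \<omega> + e *\<^sub>R U' n \<omega>))
        + dW W T N (Suc n) \<omega> *\<^sub>R (X n \<omega> + e *\<^sub>R X' n \<omega> + r n)"
    using adm hom unfolding slq_admissible_def by (intro implicit_step_add_scaleR) auto
qed

lemma slq_optimal_first_variation:
  assumes opt: "slq_optimal M W T N \<alpha> a x0 r X U"
    and hom: "slq_admissible M W T N a 0 (\<lambda>_. 0) X' U'"
  shows "slq_cost_inner M T N \<alpha> X U X' U' = 0"
proof (rule nonneg_quadratic_imp_linear_coeff_zero)
  fix e
  have adm: "slq_admissible M W T N a x0 r X U" using opt unfolding slq_optimal_def by blast
  have "slq_cost M T N \<alpha> X U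
      \<le> slq_cost M T N \<alpha> (\<lambda>n \<omega>. X n \<omega> + e *\<^sub>R X' n \<omega>) (\<lambda>n \<omega>. U n \<omega> + e *\<^sub>R U' n \<omega>)"
    using opt slq_admissible_add_scaleR[OF adm hom] unfolding slq_optimal_def by blast
  also have "\<dots> = slq_cost M T N \<alpha> X U + e * slq_cost_inner M T N \<alpha> X U X' U'
      + e\<^sup>2 * slq_cost M T N \<alpha> X' U'"
    by (intro slq_cost_add_scaleR slq_admissible_square_integrable[OF adm] slq_admissible_square_integrable[OF hom])
  finally show "0 \<le> e * slq_cost_inner M T N \<alpha> X U X' U' + e\<^sup>2 * slq_cost M T N \<alpha> X' U'" by simp
qed

(* The solution of the scheme with x0 = 0 and r = 0 driven by control_perturbation i phi,
   see state_perturbation_step. *)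
definition state_perturbation :: "nat \<Rightarrow> ('w \<Rightarrow> 'v) \<Rightarrow> nat \<Rightarrow> 'w \<Rightarrow> 'v" where
  "state_perturbation i \<phi> n \<omega> =
     (if n \<le> i then 0 else \<tau> *\<^sub>R (A0 a \<tau> ^^ (n - i)) (noise_prod i n \<omega> *\<^sub>R \<phi> \<omega>))"

definition control_perturbation :: "nat \<Rightarrow> ('w \<Rightarrow> 'v) \<Rightarrow> nat \<Rightarrow> 'w \<Rightarrow> 'v" where
  "control_perturbation i \<phi> n \<omega> = (if n = i then \<phi> \<omega> else 0)"

lemma state_perturbation_step:
  "state_perturbation i \<phi> (Suc n) \<omega> = A0 a \<tau> ((1 + dW W T N (Suc n) \<omega>) *\<^sub>R state_perturbation i \<phi> n \<omega>
     + \<tau> *\<^sub>R control_perturbation i \<phi> n \<omega> + dW W T N (Suc n) \<omega> *\<^sub>R 0)"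
proof -
  have lin: "linear (A0 a \<tau> ^^ k)" for k by (rule linear_funpow[OF linear_A0])
  consider "n < i" | "n = i" | "i < n" by linarith
  then show ?thesis
  proof cases
    case 1
    then show ?thesis
      by (simp add: state_perturbation_def control_perturbation_def linear_0[OF linear_A0])
  next
    case 2
    then show ?thesis
      by (simp add: state_perturbation_def control_perturbation_def noise_prod_self linear_scale[OF linear_A0])
  next
    case 3
    then have "Suc n - i = Suc (n - i)" by simp
    with 3 show ?thesis
      by (simp add: state_perturbation_def control_perturbation_def noise_prod_Suc
          linear_scale[OF linear_A0] linear_scale[OF lin])
  qed
qed

lemma state_perturbation_measurable:
  assumes \<phi>: "\<phi> \<in> borel_measurable (\<F> i)" and n: "n \<le> N"
  shows "state_perturbation i \<phi> n \<in> borel_measurable (\<F> n)"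
proof (cases "n \<le> i")
  case False
  have [measurable]: "noise_prod i n \<in> borel_measurable (\<F> n)" "\<phi> \<in> borel_measurable (\<F> n)"
      "A0 a \<tau> ^^ (n - i) \<in> borel_measurable borel"
    using noise_prod_measurable[OF order.refl n] measurable_grid_filtration_mono[OF _ n \<phi>] False
      borel_measurable_linear[OF linear_funpow[OF linear_A0]]
    by auto
  show ?thesis using False unfolding state_perturbation_def[abs_def] by simp
qed (simp add: state_perturbation_def[abs_def])

lemma square_integrable_state_perturbation:
  assumes "\<phi> \<in> borel_measurable M" "\<And>\<omega>. norm (\<phi> \<omega>) \<le> 1" "n \<le> N"
  shows "square_integrable M (state_perturbation i \<phi> n)"
proof -
  have "square_integrable M (\<lambda>\<omega>. \<tau> *\<^sub>R (A0 a \<tau> ^^ (n - i)) (noise_prod i n \<omega> *\<^sub>R \<phi> \<omega>))"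
    by (intro square_integrable_scaleR square_integrable_linear[OF linear_funpow[OF linear_A0]]
        square_integrable_scaleR_bounded[OF square_integrable_noise_prod] assms)
  then show ?thesis
    by (cases "n \<le> i") (simp_all add: square_integrable_def state_perturbation_def[abs_def])
qed

lemma square_integrable_control_perturbation:
  assumes "\<phi> \<in> borel_measurable M" "\<And>\<omega>. norm (\<phi> \<omega>) \<le> 1"
  shows "square_integrable M (control_perturbation i \<phi> n)"
proof -
  interpret prob_space M by (rule prob_space)
  have "square_integrable M (\<lambda>\<omega>. 1 *\<^sub>R \<phi> \<omega>)"
    by (rule square_integrable_scaleR_bounded[OF _ assms]) (simp add: square_integrable_def)
  then show ?thesis
    by (cases "n = i") (simp_all add: square_integrable_def control_perturbation_def[abs_def])
qed

lemma slq_admissible_perturbation: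
  assumes i: "i < N" and \<phi>: "\<phi> \<in> borel_measurable (\<F> i)" and bounded: "\<And>\<omega>. norm (\<phi> \<omega>) \<le> 1"
  shows "slq_admissible M W T N a 0 (\<lambda>_. 0) (state_perturbation i \<phi>) (control_perturbation i \<phi>)"
  unfolding slq_admissible_def
proof (intro conjI allI impI ballI)
  have \<phi>_M: "\<phi> \<in> borel_measurable M" by (rule measurable_grid_filtration_M[OF _ \<phi>]) (use i in simp)
  fix n
  show "control_perturbation i \<phi> n \<in> borel_measurable (\<F> n)"
    using \<phi> by (cases "n = i") (simp_all add: control_perturbation_def[abs_def])
  show "integrable M (\<lambda>\<omega>. (norm (control_perturbation i \<phi> n \<omega>))\<^sup>2)"
    using square_integrable_control_perturbation[OF \<phi>_M bounded] unfolding square_integrable_def by blast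
  assume "n \<le> N"
  then show "state_perturbation i \<phi> n \<in> borel_measurable (\<F> n)"
      and "integrable M (\<lambda>\<omega>. (norm (state_perturbation i \<phi> n \<omega>))\<^sup>2)"
    using state_perturbation_measurable[OF \<phi>] square_integrable_state_perturbation[OF \<phi>_M bounded]
    unfolding square_integrable_def by auto
next
  fix n \<omega>
  show "state_perturbation i \<phi> (Suc n) \<omega> - state_perturbation i \<phi> n \<omega>
      = \<tau> *\<^sub>R (disc_lap a (state_perturbation i \<phi> (Suc n) \<omega>) + control_perturbation i \<phi> n \<omega>)
        + dW W T N (Suc n) \<omega> *\<^sub>R (state_perturbation i \<phi> n \<omega> + 0)"
    unfolding implicit_step_iff by (rule state_perturbation_step)
qed (simp add: state_perturbation_def)

end

section \<open>The optimality condition\<close>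

locale slq_optimum = slq_grid M W T N a
  for M :: "'w measure" and W T N and a :: "'v::euclidean_space \<Rightarrow> 'v \<Rightarrow> real" +
  fixes \<alpha> :: real and x0 :: 'v and r :: "nat \<Rightarrow> 'v" and X U :: "nat \<Rightarrow> 'w \<Rightarrow> 'v"
  assumes optimal: "slq_optimal M W T N \<alpha> a x0 r X U"
begin

lemma admissible: "slq_admissible M W T N a x0 r X U"
  using optimal unfolding slq_optimal_def by blast

lemma integrable_U: "n < N \<Longrightarrow> integrable M (U n)"
  using prob_space slq_admissible_square_integrable(2)[OF admissible]
  by (simp add: prob_space_def finite_measure.integrable_square_integrable)

definition backward_term :: "nat \<Rightarrow> nat \<Rightarrow> 'w \<Rightarrow> 'v" where
  "backward_term i j \<omega> = (A0 a \<tau> ^^ (j - i)) (noise_prod i j \<omega> *\<^sub>R X j \<omega>)"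

lemma integrable_backward_term: "j \<le> N \<Longrightarrow> integrable M (backward_term i j)"
  unfolding backward_term_def
  by (intro integrable_bounded_linear[OF linear_funpow[OF linear_A0, unfolded linear_conv_bounded_linear]]
      integrable_scaleR_square_integrable square_integrable_noise_prod
      slq_admissible_square_integrable(1)[OF admissible])

lemma K_op_backward_term:
  "K_op M W T N \<alpha> a X i = (\<lambda>\<omega>.
     - \<tau> *\<^sub>R vec_cond_exp M (\<F> i) (\<lambda>\<omega>'. \<Sum>j\<in>{i+1..N}. backward_term i j \<omega>') \<omega>
     - \<alpha> *\<^sub>R vec_cond_exp M (\<F> i) (backward_term i N) \<omega>)"
  unfolding K_op_def backward_term_def[abs_def] noise_prod_def ..

lemma K_op_measurable: "K_op M W T N \<alpha> a X i \<in> borel_measurable (\<F> i)"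
  unfolding K_op_def by measurable

lemma integrable_K_op: "i < N \<Longrightarrow> integrable M (K_op M W T N \<alpha> a X i)"
proof -
  assume "i < N"
  then interpret sigma_finite_subalgebra M "\<F> i" by (intro sigma_finite_subalgebra_grid) simp
  show ?thesis unfolding K_op_backward_term
    by (intro Bochner_Integration.integrable_diff integrable_scaleR_right integrable_vec_cond_exp
        Bochner_Integration.integrable_sum integrable_backward_term) auto
qed

lemma integral_inner_K_op:
  assumes i: "i < N" and \<phi>: "\<phi> \<in> borel_measurable (\<F> i)" and bounded: "\<And>\<omega>. norm (\<phi> \<omega>) \<le> 1"
  shows "(\<integral>\<omega>. K_op M W T N \<alpha> a X i \<omega> \<bullet> \<phi> \<omega> \<partial>M)
    = - \<tau> * (\<Sum>j\<in>{i+1..N}. \<integral>\<omega>. backward_term i j \<omega> \<bullet> \<phi> \<omega> \<partial>M)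
      - \<alpha> * (\<integral>\<omega>. backward_term i N \<omega> \<bullet> \<phi> \<omega> \<partial>M)"
proof -
  interpret sigma_finite_subalgebra M "\<F> i" using i by (intro sigma_finite_subalgebra_grid) simp
  have \<phi>_M: "\<phi> \<in> borel_measurable M" by (rule measurable_from_subalg[OF subalg \<phi>])
  let ?S = "\<lambda>\<omega>. \<Sum>j\<in>{i+1..N}. backward_term i j \<omega>"
  have S: "integrable M ?S" by (intro Bochner_Integration.integrable_sum integrable_backward_term) auto
  have B: "integrable M (backward_term i N)" by (rule integrable_backward_term) simp
  have "(\<integral>\<omega>. K_op M W T N \<alpha> a X i \<omega> \<bullet> \<phi> \<omega> \<partial>M)
      = - \<tau> * (\<integral>\<omega>. vec_cond_exp M (\<F> i) ?S \<omega> \<bullet> \<phi> \<omega> \<partial>M)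
        - \<alpha> * (\<integral>\<omega>. vec_cond_exp M (\<F> i) (backward_term i N) \<omega> \<bullet> \<phi> \<omega> \<partial>M)"
    using integrable_inner_bounded[OF integrable_vec_cond_exp[OF S] \<phi>_M bounded]
      integrable_inner_bounded[OF integrable_vec_cond_exp[OF B] \<phi>_M bounded]
    by (simp add: K_op_backward_term inner_diff_left)
  also have "(\<integral>\<omega>. vec_cond_exp M (\<F> i) ?S \<omega> \<bullet> \<phi> \<omega> \<partial>M) = (\<integral>\<omega>. ?S \<omega> \<bullet> \<phi> \<omega> \<partial>M)"
    by (rule integral_inner_vec_cond_exp[OF S \<phi> bounded])
  also have "\<dots> = (\<Sum>j\<in>{i+1..N}. \<integral>\<omega>. backward_term i j \<omega> \<bullet> \<phi> \<omega> \<partial>M)"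
    unfolding inner_sum_left
    by (intro Bochner_Integration.integral_sum integrable_inner_bounded[OF _ \<phi>_M bounded]
        integrable_backward_term) auto
  also have "(\<integral>\<omega>. vec_cond_exp M (\<F> i) (backward_term i N) \<omega> \<bullet> \<phi> \<omega> \<partial>M)
      = (\<integral>\<omega>. backward_term i N \<omega> \<bullet> \<phi> \<omega> \<partial>M)"
    by (rule integral_inner_vec_cond_exp[OF B \<phi> bounded])
  finally show ?thesis .
qed

lemma integral_inner_state_perturbation:
  "(\<integral>\<omega>. X n \<omega> \<bullet> state_perturbation i \<phi> n \<omega> \<partial>M)
    = (if n \<le> i then 0 else \<tau> * (\<integral>\<omega>. backward_term i n \<omega> \<bullet> \<phi> \<omega> \<partial>M))"
proof -
  have "X n \<omega> \<bullet> (A0 a \<tau> ^^ (n - i)) (noise_prod i n \<omega> *\<^sub>R \<phi> \<omega>) = backward_term i n \<omega> \<bullet> \<phi> \<omega>" for \<omega>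
    unfolding backward_term_def funpow_self_adjoint[OF A0_self_adjoint, symmetric]
    by (simp add: linear_scale[OF linear_funpow[OF linear_A0]])
  then show ?thesis by (simp add: state_perturbation_def)
qed

lemma slq_cost_inner_perturbation:
  assumes i: "i < N" and \<phi>: "\<phi> \<in> borel_measurable (\<F> i)" and bounded: "\<And>\<omega>. norm (\<phi> \<omega>) \<le> 1"
  shows "slq_cost_inner M T N \<alpha> X U (state_perturbation i \<phi>) (control_perturbation i \<phi>)
    = \<tau> * (\<integral>\<omega>. (U i \<omega> - K_op M W T N \<alpha> a X i \<omega>) \<bullet> \<phi> \<omega> \<partial>M)"
proof -
  have \<phi>_M: "\<phi> \<in> borel_measurable M" by (rule measurable_grid_filtration_M[OF _ \<phi>]) (use i in simp)
  have "(\<Sum>n\<in>{1..N}. \<integral>\<omega>. X n \<omega> \<bullet> state_perturbation i \<phi> n \<omega> \<partial>M)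
      = (\<Sum>n\<in>{i+1..N}. \<integral>\<omega>. X n \<omega> \<bullet> state_perturbation i \<phi> n \<omega> \<partial>M)"
    by (rule sum.mono_neutral_right) (auto simp: integral_inner_state_perturbation)
  also have "\<dots> = \<tau> * (\<Sum>j\<in>{i+1..N}. \<integral>\<omega>. backward_term i j \<omega> \<bullet> \<phi> \<omega> \<partial>M)"
    by (simp add: integral_inner_state_perturbation sum_distrib_left)
  finally have X_sum: "(\<Sum>n\<in>{1..N}. \<integral>\<omega>. X n \<omega> \<bullet> state_perturbation i \<phi> n \<omega> \<partial>M)
      = \<tau> * (\<Sum>j\<in>{i+1..N}. \<integral>\<omega>. backward_term i j \<omega> \<bullet> \<phi> \<omega> \<partial>M)" .
  have "(\<integral>\<omega>. U n \<omega> \<bullet> control_perturbation i \<phi> n \<omega> \<partial>M) = (if n = i then \<integral>\<omega>. U i \<omega> \<bullet> \<phi> \<omega> \<partial>M else 0)"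
    for n by (cases "n = i") (simp_all add: control_perturbation_def)
  then have U_sum: "(\<Sum>n<N. \<integral>\<omega>. U n \<omega> \<bullet> control_perturbation i \<phi> n \<omega> \<partial>M) = (\<integral>\<omega>. U i \<omega> \<bullet> \<phi> \<omega> \<partial>M)"
    using i by simp
  have "(\<integral>\<omega>. (U i \<omega> - K_op M W T N \<alpha> a X i \<omega>) \<bullet> \<phi> \<omega> \<partial>M)
      = (\<integral>\<omega>. U i \<omega> \<bullet> \<phi> \<omega> \<partial>M) - (\<integral>\<omega>. K_op M W T N \<alpha> a X i \<omega> \<bullet> \<phi> \<omega> \<partial>M)"
    using integrable_inner_bounded[OF integrable_U[OF i] \<phi>_M bounded]
      integrable_inner_bounded[OF integrable_K_op[OF i] \<phi>_M bounded]
    by (simp add: inner_diff_left)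
  then show ?thesis
    unfolding slq_cost_inner_def X_sum U_sum integral_inner_K_op[OF i \<phi> bounded]
    using i by (simp add: integral_inner_state_perturbation algebra_simps)
qed

lemma slq_optimality_condition:
  assumes i: "i < N"
  shows "AE \<omega> in M. U i \<omega> - K_op M W T N \<alpha> a X i \<omega> = 0"
proof (rule AE_zero_if_integral_inner_zero)
  show "integrable M (\<lambda>\<omega>. U i \<omega> - K_op M W T N \<alpha> a X i \<omega>)"
    using integrable_U[OF i] integrable_K_op[OF i] by simp
  have [measurable]: "U i \<in> borel_measurable (\<F> i)" "K_op M W T N \<alpha> a X i \<in> borel_measurable (\<F> i)"
    using admissible i K_op_measurable unfolding slq_admissible_def by auto
  show "(\<lambda>\<omega>. U i \<omega> - K_op M W T N \<alpha> a X i \<omega>) \<in> borel_measurable (\<F> i)" by measurable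
  fix \<phi> :: "'w \<Rightarrow> 'v" assume \<phi>: "\<phi> \<in> borel_measurable (\<F> i)" and bounded: "\<And>\<omega>. norm (\<phi> \<omega>) \<le> 1"
  have "\<tau> * (\<integral>\<omega>. (U i \<omega> - K_op M W T N \<alpha> a X i \<omega>) \<bullet> \<phi> \<omega> \<partial>M) = 0"
    using slq_optimal_first_variation[OF optimal slq_admissible_perturbation[OF i \<phi> bounded]]
    unfolding slq_cost_inner_perturbation[OF i \<phi> bounded] .
  then show "(\<integral>\<omega>. (U i \<omega> - K_op M W T N \<alpha> a X i \<omega>) \<bullet> \<phi> \<omega> \<partial>M) = 0" using T_pos N_pos by simp
qed

end

theorem theorem3p2:
  fixes M :: "'w measure" and W :: "real \<Rightarrow> 'w \<Rightarrow> real"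
    and T \<alpha> :: real and N :: nat
    and a :: "'v::euclidean_space \<Rightarrow> 'v \<Rightarrow> real"
    and x0 :: 'v and r :: "nat \<Rightarrow> 'v"
    and X U :: "nat \<Rightarrow> 'w \<Rightarrow> 'v"
  assumes "prob_space M" and "complete_measure M" and "wiener_process M T W"
    and "T > 0" and "N > 0" and "T / real N \<le> 1" and "\<alpha> \<ge> 0"
    and "grad_form a"
    and "slq_optimal M W T N \<alpha> a x0 r X U"
  shows "(\<forall>n<N. \<forall>\<omega>\<in>space M.
            X (Suc n) \<omega> =
              (A0 a (T / real N) ^^ (n + 1))
                 ((\<Prod>j\<in>{1..n+1}. 1 + dW W T N j \<omega>) *\<^sub>R X 0 \<omega>)
            + (T / real N) *\<^sub>R (\<Sum>j\<in>{0..n}. (A0 a (T / real N) ^^ (n + 1 - j))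
                 ((\<Prod>k\<in>{j+2..n+1}. 1 + dW W T N k \<omega>) *\<^sub>R U j \<omega>))
            + (\<Sum>j\<in>{0..n}. (A0 a (T / real N) ^^ (n + 1 - j))
                 ((\<Prod>k\<in>{j+2..n+1}. 1 + dW W T N k \<omega>) *\<^sub>R (dW W T N (j + 1) \<omega> *\<^sub>R r j))))
       \<and> (\<forall>\<omega>\<in>space M. X 0 \<omega> = x0)
       \<and> (\<forall>n<N. AE \<omega> in M. U n \<omega> - K_op M W T N \<alpha> a X n \<omega> = 0)"
proof -
  (* complete_measure M, T / N <= 1 and 0 <= alpha serve existence and uniqueness of the optimum in the
     paper; these necessary conditions do not need them. *)
  interpret slq_optimum M W T N a \<alpha> x0 r X U
    by (intro slq_optimum.intro slq_grid.intro wiener_grid.intro slq_grid_axioms.intro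
        slq_optimum_axioms.intro assms)
  have "\<forall>\<omega>\<in>space M. X 0 \<omega> = x0" using admissible unfolding slq_admissible_def by blast
  then show ?thesis
    by (intro conjI allI impI ballI slq_admissible_variation_of_constants[OF admissible]
        slq_optimality_condition) auto
qed

end
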